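(* Let $f_\bullet\colon X\hookrightarrow Z$ be an injective map of sets between finite metric spaces (not necessarily non-expansive), $V=\mathrm{PH}_0(X)$, $U=\mathrm{PH}_0(Z)$, and $f_0\colon V_0\to U_0$ the induced linear map. Then $\mathcal{M}^0_f$ induces an injection $\sigma^f\colon\mathrm{Rep}\,\mathcal{B}(V)\hookrightarrow\mathrm{Rep}\,\mathcal{B}(U)$; that is, $\sum_b\mathcal{M}^0_f(a,b)=m^V(a)$ for every $a\in S^V$ and $\sum_a \mathcal{M}^0_f(a,b)\le m^U(b)$ for every $b\in S^U$, so that there is an injection matching exactly $\mathcal{M}^0_f(a,b)$ copies of $[0,a)$ to copies of $[0,b)$ for all $a,b$.
   Context: All vector spaces are over $\mathbb{Z}_2$. For a finite metric space $X$, $\mathrm{VR}_r(X)$ is the graph on $X$ with edges $[x,y]$ for $d^X(x,y)\le r$, and $\mathrm{PH}_0(X)$ is the persistence module $r\mapsto H_0(\mathrm{VR}_r(X))$ (free on connected components) with structure maps $\rho_{rs}$ induced by inclusion; $V_0$ has basis $X$ and $f_0$ sends $x$ to $f_\bullet(x)$. The barcode $\mathcal{B}(V)=(S^V,m^V)$ is the multiset of finite death values $b$ of bars $[0,b)$ (infinite bar excluded). $\mathrm{Rep}(S,m)=\{(s,\ell):s\in S, 1\le\ell\le m(s)\}$. With $\ker^+_b(U)=\ker(\rho^U_{0b})$ and $\ker^-_b(U)=\bigcup_{0\le r<b}\ker(\rho^U_{0r})$, $\mathcal{M}^0_f(a,b)=\dim\frac{f_0(\ker^+_a V)\cap \ker^+_b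 U}{f_0(\ker^-_a V)\cap\ker^+_b U+f_0(\ker^+_a V)\cap \ker^-_b U}$ for $a,b>0$. *)

theory Defs
  imports "HOL-Analysis.Abstract_Metric_Spaces" "HOL-Library.Z2" "HOL-Library.Function_Algebras"
begin

text \<open>Vector spaces over Z_2: vectors are functions into bit with pointwise operations.
  V_0 (chain space of X) = functions X -> Z_2 vanishing outside X, with basis the indicators of points.\<close>

definition scaleZ2 :: "bit \<Rightarrow> ('a \<Rightarrow> bit) \<Rightarrow> ('a \<Rightarrow> bit)" where
  "scaleZ2 c v = (\<lambda>x. c * v x)"

definition dimZ2 :: "('a \<Rightarrow> bit) set \<Rightarrow> nat" where
  "dimZ2 W = vector_space.dim scaleZ2 W"

definition spanZ2 :: "('a \<Rightarrow> bit) set \<Rightarrow> ('a \<Rightarrow> bit) set" where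
  "spanZ2 W = module.span scaleZ2 W"

definition quot_dim :: "('a \<Rightarrow> bit) set \<Rightarrow> ('a \<Rightarrow> bit) set \<Rightarrow> nat" where
  "quot_dim W1 W2 = dimZ2 W1 - dimZ2 W2"

definition chains0 :: "'a set \<Rightarrow> ('a \<Rightarrow> bit) set" where
  "chains0 X = {v. \<forall>x. x \<notin> X \<longrightarrow> v x = 0}"

text \<open>Connectivity in the Vietoris-Rips graph VR_r(X): edges [x,y] with d x y <= r.\<close>
definition vr_conn :: "'a set \<Rightarrow> ('a \<Rightarrow> 'a \<Rightarrow> real) \<Rightarrow> real \<Rightarrow> 'a \<Rightarrow> 'a \<Rightarrow> bool" where
  "vr_conn X d r = (\<lambda>x y. x \<in> X \<and> y \<in> X \<and> d x y \<le> r)\<^sup>*\<^sup>*"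

definition vr_components :: "'a set \<Rightarrow> ('a \<Rightarrow> 'a \<Rightarrow> real) \<Rightarrow> real \<Rightarrow> 'a set set" where
  "vr_components X d r = X // {(x, y). vr_conn X d r x y}"

text \<open>rho_{0r} : V_0 -> H_0(VR_r(X)) (free on components), sending x to its component.\<close>
definition rho0 :: "'a set \<Rightarrow> ('a \<Rightarrow> 'a \<Rightarrow> real) \<Rightarrow> real \<Rightarrow> ('a \<Rightarrow> bit) \<Rightarrow> ('a set \<Rightarrow> bit)" where
  "rho0 X d r v = (\<lambda>C. if C \<in> vr_components X d r then (\<Sum>x\<in>C. v x) else 0)"

definition ker_plus :: "'a set \<Rightarrow> ('a \<Rightarrow> 'a \<Rightarrow> real) \<Rightarrow> real \<Rightarrow> ('a \<Rightarrow> bit) set" where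
  "ker_plus X d b = {v \<in> chains0 X. rho0 X d b v = 0}"

definition ker_minus :: "'a set \<Rightarrow> ('a \<Rightarrow> 'a \<Rightarrow> real) \<Rightarrow> real \<Rightarrow> ('a \<Rightarrow> bit) set" where
  "ker_minus X d b = (\<Union>r\<in>{0..<b}. ker_plus X d r)"

text \<open>Multiplicity of bars [0,b) in the barcode of PH_0(X):
  the drop in rank of rho_{0r} at r = b, i.e. dim ker^+_b - dim ker^-_b.\<close>
definition bar_mult :: "'a set \<Rightarrow> ('a \<Rightarrow> 'a \<Rightarrow> real) \<Rightarrow> real \<Rightarrow> nat" where
  "bar_mult X d b = (if b > 0 then dimZ2 (ker_plus X d b) - dimZ2 (ker_minus X d b) else 0)"

definition bar_set :: "'a set \<Rightarrow> ('a \<Rightarrow> 'a \<Rightarrow> real) \<Rightarrow> real set" where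
  "bar_set X d = {b. 0 < b \<and> 0 < bar_mult X d b}"

definition Rep :: "real set \<Rightarrow> (real \<Rightarrow> nat) \<Rightarrow> (real \<times> nat) set" where
  "Rep S m = {(s, l). s \<in> S \<and> 1 \<le> l \<and> l \<le> m s}"

definition f0 :: "'a set \<Rightarrow> ('a \<Rightarrow> 'b) \<Rightarrow> ('a \<Rightarrow> bit) \<Rightarrow> ('b \<Rightarrow> bit)" where
  "f0 X f v = (\<lambda>z. \<Sum>x\<in>{x\<in>X. f x = z}. v x)"

definition Mf :: "'a set \<Rightarrow> ('a \<Rightarrow> 'a \<Rightarrow> real) \<Rightarrow> 'b set \<Rightarrow> ('b \<Rightarrow> 'b \<Rightarrow> real)
    \<Rightarrow> ('a \<Rightarrow> 'b) \<Rightarrow> real \<Rightarrow> real \<Rightarrow> nat" where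
  "Mf X dX Z dZ f a b =
     quot_dim (f0 X f ` ker_plus X dX a \<inter> ker_plus Z dZ b)
              (spanZ2 ((f0 X f ` ker_minus X dX a \<inter> ker_plus Z dZ b)
                       \<union> (f0 X f ` ker_plus X dX a \<inter> ker_minus Z dZ b)))"

end

(*
  M^0_f(a,b) is the dimension of a quotient of f_0(ker^+_a V) \<inter> ker^+_b U. By the Grassmann
  formula it is the second difference, over the rectangle (a_-, a] \<times> (b_-, b] between consecutive
  critical radii, of meet_dim r s = dim (f_0(ker^+_r V) \<inter> ker^+_s U). Summing over b therefore
  telescopes to dim ker^+_a V - dim ker^+_{a_-} V = m^V(a): f_0 is injective, and beyond the
  diameter of Z the kernel ker^+_s U consists of all chains with coefficient sum 0, a sum that f_0
  preserves. Summing over a telescopes to meet_dim r b - meet_dim r b_- for r beyond the diameter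
  of X, which the Grassmann formula bounds by dim ker^+_b U - dim ker^+_{b_-} U = m^U(b). A
  nonnegative integer matrix with these row sums and column bounds is realised by an injection
  between bar representatives.
*)

theory Submission
  imports Defs
begin

section \<open>Dimensions of finite subspaces\<close>

text \<open>The library's \<open>dim_sums_Int\<close> and \<open>dim_image_eq\<close> live in finite-dimensional
  ambient spaces, which the spaces \<open>'a \<Rightarrow> bit\<close> of chains are not; here finiteness is
  assumed of the subspaces instead.\<close>

context vector_space
begin

lemma dim_subset_finite:
  assumes "S \<subseteq> T" "finite T"
  shows "dim S \<le> dim T"
proof -
  obtain B where "B \<subseteq> T" "independent B" "T \<subseteq> span B" "card B = dim T"
    by (rule basis_exists)
  with assms show ?thesis
    using dim_le_card[of S B] finite_subset by fastforce
qed

lemma independent_Un_Diff_spanning_Int: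
  assumes A: "subspace A" and B: "subspace B" and C: "A \<inter> B \<subseteq> span C"
    and CA: "CA \<subseteq> A" "independent CA"
    and CB: "C \<subseteq> CB" "CB \<subseteq> B" "independent CB" "finite CB"
  shows "independent (CA \<union> (CB - C))" and "CA \<inter> (CB - C) = {}"
proof -
  have not_in_span: "x \<notin> span (CA \<union> T)" if x: "x \<in> CB - C" and T: "T \<subseteq> CB - C - {x}" for x T
  proof
    assume "x \<in> span (CA \<union> T)"
    then obtain a t where xat: "x = a + t" and a: "a \<in> span CA" and t: "t \<in> span T"
      unfolding span_Un by blast
    have "x \<in> span CB" "t \<in> span CB"
      using x T t span_mono[of T CB] span_base[of x CB] by auto
    then have "a \<in> B"
      using xat span_diff[of x CB t] span_minimal[OF CB(2) B] by force
    moreover have "a \<in> A"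
      using a span_minimal[OF CA(1) A] by blast
    ultimately have "x \<in> span (C \<union> T)"
      using xat t C unfolding span_Un by blast
    moreover have "C \<union> T \<subseteq> CB - {x}"
      using x T CB by blast
    ultimately have "x \<in> span (CB - {x})"
      using span_mono by blast
    with x CB show False
      unfolding dependent_def by blast
  qed
  have "independent (CA \<union> T)" if "T \<subseteq> CB - C" for T
    using finite_subset[OF that finite_Diff[OF CB(4)]] that
  proof (induction T rule: finite_induct)
    case (insert x T)
    then show ?case
      using not_in_span[of x T] independent_insertI[of x "CA \<union> T"] by auto
  qed (use CA in simp)
  then show "independent (CA \<union> (CB - C))"
    by blast
  show "CA \<inter> (CB - C) = {}"
    using not_in_span[of _ "{}"] span_base by blast
qed

lemma dim_span_Un_Int:
  assumes A: "subspace A" and B: "subspace B" and "finite A" "finite B"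
  shows "dim (span (A \<union> B)) + dim (A \<inter> B) = dim A + dim B"
proof -
  obtain C where C: "C \<subseteq> A \<inter> B" "independent C" "A \<inter> B \<subseteq> span C" "card C = dim (A \<inter> B)"
    using basis_exists by blast
  obtain CA where CA: "C \<subseteq> CA" "CA \<subseteq> A" "independent CA" "A \<subseteq> span CA"
    using maximal_independent_subset_extend[of C A] C by blast
  obtain CB where CB: "C \<subseteq> CB" "CB \<subseteq> B" "independent CB" "B \<subseteq> span CB"
    using maximal_independent_subset_extend[of C B] C by blast
  have fin: "finite CA" "finite CB"
    using CA(2) CB(2) assms(3,4) by (auto intro: finite_subset)
  note basis = independent_Un_Diff_spanning_Int[OF A B C(3) CA(2,3) CB(1-3) fin(2)]
  have "span (CA \<union> (CB - C)) = span (A \<union> B)"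
  proof
    show "span (CA \<union> (CB - C)) \<subseteq> span (A \<union> B)"
      using CA CB by (intro span_mono) blast
    have "A \<union> B \<subseteq> span (CA \<union> (CB - C))"
      using CA CB span_mono[of CA "CA \<union> (CB - C)"] span_mono[of CB "CA \<union> (CB - C)"] by blast
    then show "span (A \<union> B) \<subseteq> span (CA \<union> (CB - C))"
      using span_minimal subspace_span by blast
  qed
  then have "dim (span (A \<union> B)) = card (CA \<union> (CB - C))"
    using dim_eq_card_independent[OF basis(1)] by (metis dim_span)
  also have "\<dots> = card CA + (card CB - card C)"
    using basis(2) fin finite_subset[OF CB(1) fin(2)] CB(1) by (simp add: card_Un_disjoint card_Diff_subset)
  finally have "dim (span (A \<union> B)) = card CA + (card CB - card C)" .
  moreover have "card C \<le> card CB"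
    using CB(1) fin(2) by (rule card_mono[rotated])
  moreover have "card CA = dim A" "card CB = dim B"
    using CA CB basis_card_eq_dim by auto
  ultimately show ?thesis
    using C by linarith
qed

lemma dim_zero_space: "dim {0} = 0"
  by (metis dim_span span_empty dim_eq_card_independent independent_empty card.empty)

lemma dim_Int_diff_le:
  assumes "subspace S" "subspace K" "subspace K'" "K' \<subseteq> K" "finite K"
  shows "dim (S \<inter> K) - dim (S \<inter> K') \<le> dim K - dim K'"
proof -
  have "S \<inter> K \<inter> K' = S \<inter> K'"
    using assms by blast
  then have "dim (S \<inter> K \<union> K') + dim (S \<inter> K') = dim (S \<inter> K) + dim K'"
    using dim_span_Un_Int[of "S \<inter> K" K'] assms by (simp add: subspace_inter finite_subset)
  moreover have "dim (S \<inter> K \<union> K') \<le> dim K"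
    using dim_subset_finite[of "S \<inter> K \<union> K'" K] assms by auto
  ultimately show ?thesis
    by linarith
qed

end

lemma (in vector_space_pair) dim_image_eq_of_inj_on:
  assumes "Vector_Spaces.linear s1 s2 f" "inj_on f (vs1.span S)"
  shows "vs2.dim (f ` S) = vs1.dim S"
proof -
  interpret Vector_Spaces.linear s1 s2 f by fact
  obtain B where B: "B \<subseteq> S" "vs1.independent B" "S \<subseteq> vs1.span B" "card B = vs1.dim S"
    by (rule vs1.basis_exists)
  have "vs1.span B = vs1.span S"
    using B(1,3) vs1.span_superset by (auto simp: vs1.span_eq)
  then have "vs2.independent (f ` B)"
    using independent_injective_image[OF B(2)] assms(2) by simp
  moreover have "f ` S \<subseteq> vs2.span (f ` B)"
    using B(3) span_image by blast
  moreover have "card (f ` B) = card B"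
    using assms(2) B(1) vs1.span_superset inj_on_subset by (metis card_image)
  moreover have "f ` B \<subseteq> f ` S"
    using B(1) by (rule image_mono)
  ultimately show ?thesis
    using B(4) vs2.basis_card_eq_dim[of "f ` B" "f ` S"] by simp
qed

lemma vector_space_scaleZ2: "vector_space (scaleZ2 :: bit \<Rightarrow> ('a \<Rightarrow> bit) \<Rightarrow> ('a \<Rightarrow> bit))"
  by unfold_locales (auto simp: scaleZ2_def fun_eq_iff algebra_simps)

global_interpretation F2: vector_space "scaleZ2 :: bit \<Rightarrow> ('a \<Rightarrow> bit) \<Rightarrow> ('a \<Rightarrow> bit)"
  by (rule vector_space_scaleZ2)

lemma dimZ2_eq: "dimZ2 = F2.dim"
  by (simp add: dimZ2_def[abs_def])

lemma spanZ2_eq: "spanZ2 = F2.span"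
  by (simp add: spanZ2_def[abs_def])

lemma module_hom_scaleZ2I:
  fixes g :: "('a \<Rightarrow> bit) \<Rightarrow> ('b \<Rightarrow> bit)"
  assumes add: "\<And>v w. g (v + w) = g v + g w"
  shows "module_hom scaleZ2 scaleZ2 g"
proof -
  have "g 0 = 0"
    using add[of 0 0] by simp
  then have "g (scaleZ2 c v) = scaleZ2 c (g v)" for c v
    by (cases "c = 0") simp_all
  then show ?thesis
    by (simp add: module_hom_iff module_iff_vector_space vector_space_scaleZ2 add)
qed

lemma quot_dim_span_Int_Un:
  assumes "F2.subspace P" "F2.subspace Q" "F2.subspace K" "F2.subspace K'"
    and "finite P" "finite K" "Q \<subseteq> P" "K' \<subseteq> K"
  defines "q \<equiv> quot_dim (P \<inter> K) (spanZ2 (Q \<inter> K \<union> P \<inter> K'))"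
  shows "int q = int (F2.dim (P \<inter> K)) - int (F2.dim (Q \<inter> K))
                 - int (F2.dim (P \<inter> K')) + int (F2.dim (Q \<inter> K'))"
    and "q \<le> F2.dim K - F2.dim K'"
    and "q \<le> F2.dim P - F2.dim Q"
proof -
  have "Q \<inter> K \<inter> (P \<inter> K') = Q \<inter> K'"
    using assms by blast
  then have grassmann: "F2.dim (Q \<inter> K \<union> P \<inter> K') + F2.dim (Q \<inter> K') = F2.dim (Q \<inter> K) + F2.dim (P \<inter> K')"
    using F2.dim_span_Un_Int[of "Q \<inter> K" "P \<inter> K'"] assms
    by (simp add: F2.subspace_inter finite_subset)
  have "F2.dim (Q \<inter> K \<union> P \<inter> K') \<le> F2.dim (P \<inter> K)"
    using F2.dim_subset_finite[of "Q \<inter> K \<union> P \<inter> K'" "P \<inter> K"] assms by auto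
  moreover have q: "q = F2.dim (P \<inter> K) - F2.dim (Q \<inter> K \<union> P \<inter> K')"
    unfolding q_def quot_dim_def dimZ2_eq spanZ2_eq by simp
  ultimately show "int q = int (F2.dim (P \<inter> K)) - int (F2.dim (Q \<inter> K))
                 - int (F2.dim (P \<inter> K')) + int (F2.dim (Q \<inter> K'))"
    using grassmann by linarith
  have "F2.dim (Q \<inter> K') \<le> F2.dim (Q \<inter> K)" "F2.dim (Q \<inter> K') \<le> F2.dim (P \<inter> K')"
    using F2.dim_subset_finite[of "Q \<inter> K'" "Q \<inter> K"] F2.dim_subset_finite[of "Q \<inter> K'" "P \<inter> K'"]
      assms finite_subset by blast+
  moreover have "F2.dim (P \<inter> K) - F2.dim (P \<inter> K') \<le> F2.dim K - F2.dim K'"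
    using F2.dim_Int_diff_le assms by blast
  moreover have "F2.dim (K \<inter> P) - F2.dim (K \<inter> Q) \<le> F2.dim P - F2.dim Q"
    using F2.dim_Int_diff_le assms by blast
  ultimately show "q \<le> F2.dim K - F2.dim K'" "q \<le> F2.dim P - F2.dim Q"
    using q grassmann by (simp_all add: Int_commute)
qed

section \<open>Kernels of the Vietoris--Rips persistence module\<close>

definition vr_component :: "'a set \<Rightarrow> ('a \<Rightarrow> 'a \<Rightarrow> real) \<Rightarrow> real \<Rightarrow> 'a \<Rightarrow> 'a set" where
  "vr_component X d r x = {y. vr_conn X d r x y}"

lemma vr_conn_refl: "vr_conn X d r x x"
  by (simp add: vr_conn_def)

lemma vr_conn_trans: "vr_conn X d r x y \<Longrightarrow> vr_conn X d r y z \<Longrightarrow> vr_conn X d r x z"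
  unfolding vr_conn_def by (rule rtranclp_trans)

lemma vr_conn_closed: "vr_conn X d r x y \<Longrightarrow> x \<in> X \<Longrightarrow> y \<in> X"
  unfolding vr_conn_def by (induction rule: rtranclp_induct) auto

lemma vr_conn_mono: "r \<le> s \<Longrightarrow> vr_conn X d r x y \<Longrightarrow> vr_conn X d s x y"
  unfolding vr_conn_def by (erule rtranclp_mono[THEN predicate2D, rotated]) auto

lemma vr_conn_cong:
  assumes "\<And>x y. x \<in> X \<Longrightarrow> y \<in> X \<Longrightarrow> d x y \<le> r \<longleftrightarrow> d x y \<le> s"
  shows "vr_conn X d r = vr_conn X d s"
proof -
  have "(\<lambda>x y. x \<in> X \<and> y \<in> X \<and> d x y \<le> r) = (\<lambda>x y. x \<in> X \<and> y \<in> X \<and> d x y \<le> s)"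
    using assms by (auto simp: fun_eq_iff)
  then show ?thesis
    unfolding vr_conn_def by simp
qed

lemma vr_component_subset: "x \<in> X \<Longrightarrow> vr_component X d r x \<subseteq> X"
  using vr_conn_closed by (auto simp: vr_component_def)

lemma vr_components_eq_image: "vr_components X d r = vr_component X d r ` X"
  by (auto simp: vr_components_def quotient_def vr_component_def Image_def)

lemma ker_plus_iff:
  "v \<in> ker_plus X d r \<longleftrightarrow> v \<in> chains0 X \<and> (\<forall>x\<in>X. (\<Sum>y\<in>vr_component X d r x. v y) = 0)"
  by (auto simp: ker_plus_def rho0_def vr_components_eq_image fun_eq_iff)

lemma finite_chains0:
  assumes "finite X"
  shows "finite (chains0 X)"
proof -
  have "(UNIV :: bit set) = {0, 1}"
    using bit_not_zero_iff by blast
  then have "finite (UNIV :: bit set)"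
    by (metis finite.emptyI finite_insert)
  from finite_set_of_finite_funs[OF assms this, of 0]
  show ?thesis
    by (rule finite_subset[rotated]) (auto simp: chains0_def)
qed

lemma subspace_chains0: "F2.subspace (chains0 X)"
  by (simp add: F2.subspace_def chains0_def scaleZ2_def)

lemma subspace_ker_plus: "F2.subspace (ker_plus X d r)"
proof -
  have "rho0 X d r (v + w) = rho0 X d r v + rho0 X d r w" for v w
    unfolding rho0_def plus_fun_def by (rule ext) (simp only: sum.distrib split: if_split, simp)
  then have "module_hom scaleZ2 scaleZ2 (rho0 X d r)"
    by (rule module_hom_scaleZ2I)
  then have "F2.subspace {v. rho0 X d r v = 0}"
    by (rule module_hom.subspace_kernel)
  then show ?thesis
    using subspace_chains0 F2.subspace_inter unfolding ker_plus_def
    by (metis Collect_conj_eq Collect_mem_eq)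
qed

lemma finite_ker_plus: "finite X \<Longrightarrow> finite (ker_plus X d r)"
  by (metis finite_chains0 finite_subset ker_plus_iff subsetI)

lemma ker_plus_diamI:
  assumes "\<And>x y. x \<in> X \<Longrightarrow> y \<in> X \<Longrightarrow> d x y \<le> s"
    and "v \<in> chains0 X" "(\<Sum>x\<in>X. v x) = 0"
  shows "v \<in> ker_plus X d s"
proof -
  have "vr_component X d s x = X" if x: "x \<in> X" for x
  proof
    show "X \<subseteq> vr_component X d s x"
      using x assms(1) by (auto simp: vr_component_def vr_conn_def intro: r_into_rtranclp)
  qed (rule vr_component_subset[OF x])
  then show ?thesis
    using assms by (simp add: ker_plus_iff)
qed

locale finite_Metric_space = Metric_space +
  assumes finite_M: "finite M"
begin

lemma vr_conn_sym: "vr_conn M d r x y \<Longrightarrow> vr_conn M d r y x"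
  unfolding vr_conn_def
proof (induction rule: rtranclp_induct)
  case (step y z)
  then show ?case
    using commute by (auto intro: converse_rtranclp_into_rtranclp)
qed simp

lemma vr_component_eq:
  assumes "vr_conn M d r x y"
  shows "vr_component M d r x = vr_component M d r y"
  unfolding vr_component_def
  using vr_conn_trans[OF assms] vr_conn_trans[OF vr_conn_sym[OF assms]] by blast

lemma sum_vr_closed_eq_0:
  assumes "S \<subseteq> M" and closed: "\<And>y z. y \<in> S \<Longrightarrow> vr_conn M d r y z \<Longrightarrow> z \<in> S"
    and v: "v \<in> ker_plus M d r"
  shows "(\<Sum>y\<in>S. v y) = 0"
proof -
  have "finite S"
    using assms finite_M finite_subset by blast
  have "{x \<in> S. vr_component M d r x = vr_component M d r y} = vr_component M d r y"
    if "y \<in> S" for y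
  proof (intro set_eqI iffI)
    fix x assume "x \<in> {x \<in> S. vr_component M d r x = vr_component M d r y}"
    then show "x \<in> vr_component M d r y"
      by (metis (mono_tags) mem_Collect_eq vr_component_def vr_conn_refl)
  next
    fix x assume "x \<in> vr_component M d r y"
    then have "vr_conn M d r y x"
      by (simp add: vr_component_def)
    then show "x \<in> {x \<in> S. vr_component M d r x = vr_component M d r y}"
      using closed[OF that] vr_component_eq by simp
  qed
  moreover have "(\<Sum>x\<in>vr_component M d r y. v x) = 0" if "y \<in> S" for y
    using that v \<open>S \<subseteq> M\<close> by (auto simp: ker_plus_iff)
  ultimately have "(\<Sum>C\<in>vr_component M d r ` S. \<Sum>x\<in>{x \<in> S. vr_component M d r x = C}. v x) = 0"
    by (intro sum.neutral) auto
  then show ?thesis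
    using sum.group[OF \<open>finite S\<close> finite_imageI[OF \<open>finite S\<close>] order_refl, where g = "vr_component M d r" and h = v]
    by simp
qed

lemma sum_ker_plus_eq_0: "v \<in> ker_plus M d r \<Longrightarrow> (\<Sum>x\<in>M. v x) = 0"
  by (rule sum_vr_closed_eq_0[OF order_refl]) (auto dest: vr_conn_closed)

lemma ker_plus_mono:
  assumes "r \<le> s"
  shows "ker_plus M d r \<subseteq> ker_plus M d s"
proof
  fix v assume v: "v \<in> ker_plus M d r"
  have "(\<Sum>y\<in>vr_component M d s x. v y) = 0" if "x \<in> M" for x
  proof (rule sum_vr_closed_eq_0[OF vr_component_subset[OF that] _ v])
    fix y z
    assume "y \<in> vr_component M d s x" "vr_conn M d r y z"
    then have "vr_conn M d s x y" "vr_conn M d s y z"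
      using vr_conn_mono[OF assms] by (auto simp: vr_component_def)
    then show "z \<in> vr_component M d s x"
      unfolding vr_component_def mem_Collect_eq by (rule vr_conn_trans)
  qed
  then show "v \<in> ker_plus M d s"
    using v by (simp add: ker_plus_iff)
qed

lemma ker_plus_nonpos:
  assumes "r \<le> 0"
  shows "ker_plus M d r = {0}"
proof -
  have "vr_conn M d r x y \<Longrightarrow> x = y" for x y
    unfolding vr_conn_def
  proof (induction rule: rtranclp_induct)
    case (step y z)
    then have "d y z = 0"
      using assms nonneg[of y z] by linarith
    with step show ?case
      by simp
  qed simp
  then have singleton: "vr_component M d r x = {x}" for x
    unfolding vr_component_def by (auto intro: vr_conn_refl)
  have "v = 0" if "v \<in> ker_plus M d r" for v
  proof (rule ext)
    fix x
    show "v x = 0 x"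
      using that singleton by (cases "x \<in> M") (auto simp: ker_plus_iff chains0_def)
  qed
  then show ?thesis
    using F2.subspace_0[OF subspace_ker_plus] by blast
qed

end

definition crit_values :: "'a set \<Rightarrow> ('a \<Rightarrow> 'a \<Rightarrow> real) \<Rightarrow> real set" where
  "crit_values X d = {t \<in> case_prod d ` (X \<times> X). 0 < t}"

definition prev_value :: "real set \<Rightarrow> real \<Rightarrow> real" where
  "prev_value D b = Max (insert 0 {e \<in> D. e < b})"

lemma finite_crit_values: "finite X \<Longrightarrow> finite (crit_values X d)"
  by (simp add: crit_values_def)

lemma crit_values_pos: "t \<in> crit_values X d \<Longrightarrow> 0 < t"
  by (simp add: crit_values_def)

lemma
  assumes "finite D"
  shows prev_value_nonneg: "0 \<le> prev_value D b"
    and prev_value_less: "0 < b \<Longrightarrow> prev_value D b < b"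
    and le_prev_value: "e \<in> D \<Longrightarrow> e < b \<Longrightarrow> e \<le> prev_value D b"
proof -
  have fin: "finite (insert 0 {e \<in> D. e < b})"
    using assms by simp
  then show "0 \<le> prev_value D b" "e \<in> D \<Longrightarrow> e < b \<Longrightarrow> e \<le> prev_value D b"
    by (simp_all add: prev_value_def)
  show "prev_value D b < b" if "0 < b"
    using Max_in[OF fin] that by (auto simp: prev_value_def)
qed

lemma sum_telescope_prev_value:
  fixes g :: "real \<Rightarrow> 'b::ab_group_add"
  assumes "finite D" "\<And>b. b \<in> D \<Longrightarrow> 0 < b"
  shows "(\<Sum>b\<in>D. g b - g (prev_value D b)) = g (Max (insert 0 D)) - g 0"
  using assms
proof (induction D rule: finite_linorder_max_induct)
  case (insert m D)
  have prev_D: "prev_value (insert m D) b = prev_value D b" if "b \<in> D" for b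
  proof -
    have "{e \<in> insert m D. e < b} = {e \<in> D. e < b}"
      using insert.hyps(2) that by force
    then show ?thesis
      by (simp add: prev_value_def)
  qed
  have "{e \<in> insert m D. e < m} = D"
    using insert.hyps(2) by force
  then have prev_m: "prev_value (insert m D) m = Max (insert 0 D)"
    by (simp add: prev_value_def)
  have "Max (insert 0 (insert m D)) = m"
    using insert by (intro Max_eqI) (auto intro: less_imp_le)
  moreover have "m \<notin> D"
    using insert.hyps(2) by blast
  ultimately show ?case
    using insert prev_D prev_m by (simp add: sum.insert)
qed simp

context finite_Metric_space
begin

abbreviation prev_crit :: "real \<Rightarrow> real" where
  "prev_crit \<equiv> prev_value (crit_values M d)"

abbreviation max_crit :: real where
  "max_crit \<equiv> Max (insert 0 (crit_values M d))"

lemma finite_crit: "finite (crit_values M d)"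
  by (rule finite_crit_values[OF finite_M])

lemma ker_plus_eq_ker_plus_prev_crit:
  assumes "0 < b" "prev_crit b \<le> r" "r \<le> b" and b: "r = b \<Longrightarrow> b \<notin> crit_values M d"
  shows "ker_plus M d r = ker_plus M d (prev_crit b)"
proof -
  have "d x y \<le> r \<longleftrightarrow> d x y \<le> prev_crit b" if "x \<in> M" "y \<in> M" for x y
  proof
    assume "d x y \<le> r"
    show "d x y \<le> prev_crit b"
    proof (cases "0 < d x y")
      case True
      then have "d x y \<in> crit_values M d"
        using that by (force simp: crit_values_def)
      moreover from this have "d x y < b"
        using \<open>d x y \<le> r\<close> assms(3) b by (cases "d x y = b") auto
      ultimately show ?thesis
        by (rule le_prev_value[OF finite_crit])
    next
      case False
      then show ?thesis
        using prev_value_nonneg[OF finite_crit, of b] by linarith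
    qed
  qed (use assms in linarith)
  then have "vr_conn M d r = vr_conn M d (prev_crit b)"
    by (rule vr_conn_cong)
  then show ?thesis
    by (simp add: ker_plus_def rho0_def vr_components_def)
qed

lemma ker_minus_eq_ker_plus_prev_crit:
  assumes "0 < b"
  shows "ker_minus M d b = ker_plus M d (prev_crit b)"
proof
  show "ker_plus M d (prev_crit b) \<subseteq> ker_minus M d b"
    unfolding ker_minus_def
    using prev_value_nonneg[OF finite_crit, of b] prev_value_less[OF finite_crit assms]
    by (intro UN_upper) simp
  show "ker_minus M d b \<subseteq> ker_plus M d (prev_crit b)"
  proof
    fix v assume "v \<in> ker_minus M d b"
    then obtain r where r: "r < b" and v: "v \<in> ker_plus M d r"
      by (auto simp: ker_minus_def)
    show "v \<in> ker_plus M d (prev_crit b)"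
    proof (cases "r \<le> prev_crit b")
      case True
      then show ?thesis
        using ker_plus_mono v by blast
    next
      case False
      then show ?thesis
        using ker_plus_eq_ker_plus_prev_crit[OF assms, of r] r v by simp
    qed
  qed
qed

lemma bar_mult_eq:
  assumes "0 < b"
  shows "bar_mult M d b = F2.dim (ker_plus M d b) - F2.dim (ker_plus M d (prev_crit b))"
  using assms ker_minus_eq_ker_plus_prev_crit[OF assms] by (simp add: bar_mult_def dimZ2_eq)

lemma bar_set_subset_crit: "bar_set M d \<subseteq> crit_values M d"
proof
  fix b assume "b \<in> bar_set M d"
  then have "0 < b" "bar_mult M d b \<noteq> 0"
    by (auto simp: bar_set_def)
  then show "b \<in> crit_values M d"
    using ker_plus_eq_ker_plus_prev_crit[of b b] prev_value_less[OF finite_crit, of b]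
    by (force simp: bar_mult_eq)
qed

lemma finite_bar_set: "finite (bar_set M d)"
  using bar_set_subset_crit finite_crit by (rule finite_subset)

lemma dist_le_max_crit:
  assumes "x \<in> M" "y \<in> M"
  shows "d x y \<le> max_crit"
proof (cases "0 < d x y")
  case True
  then have "d x y \<in> crit_values M d"
    using assms by (force simp: crit_values_def)
  then show ?thesis
    using finite_crit by simp
next
  case False
  moreover have "0 \<le> max_crit"
    using finite_crit by simp
  ultimately show ?thesis
    by linarith
qed

end

section \<open>The induced map on chains\<close>

lemma module_hom_f0: "module_hom scaleZ2 scaleZ2 (f0 X f)"
proof (rule module_hom_scaleZ2I)
  show "f0 X f (v + w) = f0 X f v + f0 X f w" for v w
    unfolding f0_def plus_fun_def by (rule ext) (rule sum.distrib)
qed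

lemma f0_apply_image:
  assumes "inj_on f X" "x \<in> X"
  shows "f0 X f v (f x) = v x"
proof -
  have "{x' \<in> X. f x' = f x} = {x}"
    using assms inj_onD by fastforce
  then show ?thesis
    by (simp add: f0_def)
qed

lemma inj_on_f0:
  assumes "inj_on f X"
  shows "inj_on (f0 X f) (chains0 X)"
proof (rule inj_onI, rule ext)
  fix v w x
  assume "v \<in> chains0 X" "w \<in> chains0 X" "f0 X f v = f0 X f w"
  then show "v x = w x"
    using f0_apply_image[OF assms] by (cases "x \<in> X") (metis, simp add: chains0_def)
qed

lemma f0_in_chains0: "f ` X \<subseteq> Z \<Longrightarrow> f0 X f v \<in> chains0 Z"
  by (auto simp: chains0_def f0_def intro!: sum.neutral)

lemma sum_f0:
  assumes "finite X" "finite Z" "f ` X \<subseteq> Z"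
  shows "(\<Sum>z\<in>Z. f0 X f v z) = (\<Sum>x\<in>X. v x)"
  unfolding f0_def using sum.group[OF assms, where h = v] by simp

lemma dim_f0_image:
  assumes "inj_on f X" "F2.subspace S" "S \<subseteq> chains0 X"
  shows "F2.dim (f0 X f ` S) = F2.dim S"
proof (rule vector_space_pair.dim_image_eq_of_inj_on)
  show "vector_space_pair scaleZ2 scaleZ2"
    by (simp add: vector_space_pair_def vector_space_scaleZ2)
  show "Vector_Spaces.linear scaleZ2 scaleZ2 (f0 X f)"
    using module_hom_f0 by (simp add: module_hom_iff_linear)
  show "inj_on (f0 X f) (F2.span S)"
    using inj_on_f0[OF assms(1)] assms(3) F2.span_eq_iff[of S] assms(2) inj_on_subset by metis
qed

locale finite_metric_injection =
  X: finite_Metric_space X dX + Z: finite_Metric_space Z dZ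
  for X :: "'a set" and dX :: "'a \<Rightarrow> 'a \<Rightarrow> real" and Z :: "'b set" and dZ :: "'b \<Rightarrow> 'b \<Rightarrow> real" +
  fixes f :: "'a \<Rightarrow> 'b"
  assumes inj_f: "inj_on f X" and f_into: "f ` X \<subseteq> Z"
begin

definition meet_dim :: "real \<Rightarrow> real \<Rightarrow> int" where
  "meet_dim r s = int (F2.dim (f0 X f ` ker_plus X dX r \<inter> ker_plus Z dZ s))"

lemma subspace_f0_ker_plus: "F2.subspace (f0 X f ` ker_plus X dX r)"
  by (rule module_hom.subspace_image[OF module_hom_f0 subspace_ker_plus])

lemma finite_f0_ker_plus: "finite (f0 X f ` ker_plus X dX r)"
  using finite_ker_plus[OF X.finite_M] by simp

lemma dim_f0_ker_plus: "F2.dim (f0 X f ` ker_plus X dX r) = F2.dim (ker_plus X dX r)"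
  by (rule dim_f0_image[OF inj_f subspace_ker_plus]) (auto simp: ker_plus_def)

lemma
  assumes "0 < a" "0 < b"
  shows Mf_eq_meet_dim: "int (Mf X dX Z dZ f a b) = meet_dim a b - meet_dim (X.prev_crit a) b
                            - meet_dim a (Z.prev_crit b) + meet_dim (X.prev_crit a) (Z.prev_crit b)"
    and Mf_le_bar_mult_right: "Mf X dX Z dZ f a b \<le> bar_mult Z dZ b"
    and Mf_le_bar_mult_left: "Mf X dX Z dZ f a b \<le> bar_mult X dX a"
proof -
  have ker_X_mono: "f0 X f ` ker_plus X dX (X.prev_crit a) \<subseteq> f0 X f ` ker_plus X dX a"
    using X.ker_plus_mono prev_value_less[OF X.finite_crit assms(1)] by (intro image_mono) simp
  have ker_Z_mono: "ker_plus Z dZ (Z.prev_crit b) \<subseteq> ker_plus Z dZ b"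
    using Z.ker_plus_mono prev_value_less[OF Z.finite_crit assms(2)] by simp
  note q = quot_dim_span_Int_Un[OF subspace_f0_ker_plus subspace_f0_ker_plus
      subspace_ker_plus subspace_ker_plus finite_f0_ker_plus finite_ker_plus[OF Z.finite_M] ker_X_mono ker_Z_mono]
  have Mf: "Mf X dX Z dZ f a b =
    quot_dim (f0 X f ` ker_plus X dX a \<inter> ker_plus Z dZ b)
      (spanZ2 (f0 X f ` ker_plus X dX (X.prev_crit a) \<inter> ker_plus Z dZ b
               \<union> f0 X f ` ker_plus X dX a \<inter> ker_plus Z dZ (Z.prev_crit b)))"
    by (simp add: Mf_def X.ker_minus_eq_ker_plus_prev_crit[OF assms(1)]
        Z.ker_minus_eq_ker_plus_prev_crit[OF assms(2)])
  show "int (Mf X dX Z dZ f a b) = meet_dim a b - meet_dim (X.prev_crit a) b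
          - meet_dim a (Z.prev_crit b) + meet_dim (X.prev_crit a) (Z.prev_crit b)"
    unfolding Mf q(1) meet_dim_def ..
  show "Mf X dX Z dZ f a b \<le> bar_mult Z dZ b"
    unfolding Mf Z.bar_mult_eq[OF assms(2)] by (rule q(2))
  show "Mf X dX Z dZ f a b \<le> bar_mult X dX a"
    unfolding Mf X.bar_mult_eq[OF assms(1)] dim_f0_ker_plus[symmetric] by (rule q(3))
qed

lemma meet_eq_zero_nonpos:
  assumes "a \<le> 0 \<or> b \<le> 0"
  shows "f0 X f ` ker_plus X dX a \<inter> ker_plus Z dZ b = {0}"
proof -
  have "f0 X f ` ker_plus X dX a = {0} \<or> ker_plus Z dZ b = {0}"
    using assms X.ker_plus_nonpos Z.ker_plus_nonpos module_hom.zero[OF module_hom_f0] by auto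
  moreover have "0 \<in> f0 X f ` ker_plus X dX a" "0 \<in> ker_plus Z dZ b"
    using F2.subspace_0 subspace_f0_ker_plus subspace_ker_plus by blast+
  ultimately show ?thesis
    by blast
qed

lemma meet_dim_nonpos: "a \<le> 0 \<or> b \<le> 0 \<Longrightarrow> meet_dim a b = 0"
  by (simp add: meet_dim_def meet_eq_zero_nonpos F2.dim_zero_space)

lemma Mf_eq_0_outside:
  assumes "a \<notin> bar_set X dX \<or> b \<notin> bar_set Z dZ"
  shows "Mf X dX Z dZ f a b = 0"
proof (cases "a \<le> 0 \<or> b \<le> 0")
  case True
  then show ?thesis
    by (simp add: Mf_def quot_dim_def meet_eq_zero_nonpos dimZ2_eq F2.dim_zero_space)
next
  case False
  then have "bar_mult X dX a = 0 \<or> bar_mult Z dZ b = 0"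
    using assms by (auto simp: bar_set_def)
  then show ?thesis
    using False Mf_le_bar_mult_left Mf_le_bar_mult_right by (metis le_zero_eq not_le)
qed

lemma meet_dim_max_crit: "meet_dim r Z.max_crit = int (F2.dim (ker_plus X dX r))"
proof -
  have "f0 X f v \<in> ker_plus Z dZ Z.max_crit" if "v \<in> ker_plus X dX r" for v
  proof (rule ker_plus_diamI[OF Z.dist_le_max_crit f0_in_chains0[OF f_into]])
    show "(\<Sum>z\<in>Z. f0 X f v z) = 0"
      using sum_f0[OF X.finite_M Z.finite_M f_into] X.sum_ker_plus_eq_0[OF that] by simp
  qed
  then have "f0 X f ` ker_plus X dX r \<inter> ker_plus Z dZ Z.max_crit = f0 X f ` ker_plus X dX r"
    by blast
  then show ?thesis
    by (simp add: meet_dim_def dim_f0_ker_plus)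
qed

lemma row_sum_Mf_crit:
  assumes "0 < a"
  shows "int (\<Sum>b\<in>crit_values Z dZ. Mf X dX Z dZ f a b)
           = int (F2.dim (ker_plus X dX a)) - int (F2.dim (ker_plus X dX (X.prev_crit a)))"
proof -
  define G where "G s = meet_dim a s - meet_dim (X.prev_crit a) s" for s
  have "int (\<Sum>b\<in>crit_values Z dZ. Mf X dX Z dZ f a b) = (\<Sum>b\<in>crit_values Z dZ. G b - G (Z.prev_crit b))"
    unfolding of_nat_sum using Mf_eq_meet_dim[OF assms crit_values_pos]
    by (intro sum.cong refl) (simp add: G_def algebra_simps)
  also have "\<dots> = G Z.max_crit - G 0"
    by (rule sum_telescope_prev_value[OF Z.finite_crit crit_values_pos])
  also have "\<dots> = int (F2.dim (ker_plus X dX a)) - int (F2.dim (ker_plus X dX (X.prev_crit a)))"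
    by (simp add: G_def meet_dim_max_crit meet_dim_nonpos)
  finally show ?thesis .
qed

lemma col_sum_Mf_crit:
  assumes "0 < b"
  shows "int (\<Sum>a\<in>crit_values X dX. Mf X dX Z dZ f a b)
           = meet_dim X.max_crit b - meet_dim X.max_crit (Z.prev_crit b)"
proof -
  define H where "H r = meet_dim r b - meet_dim r (Z.prev_crit b)" for r
  have "int (\<Sum>a\<in>crit_values X dX. Mf X dX Z dZ f a b) = (\<Sum>a\<in>crit_values X dX. H a - H (X.prev_crit a))"
    unfolding of_nat_sum using Mf_eq_meet_dim[OF crit_values_pos assms]
    by (intro sum.cong refl) (simp add: H_def algebra_simps)
  also have "\<dots> = H X.max_crit - H 0"
    by (rule sum_telescope_prev_value[OF X.finite_crit crit_values_pos])
  also have "\<dots> = meet_dim X.max_crit b - meet_dim X.max_crit (Z.prev_crit b)"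
    by (simp add: H_def meet_dim_nonpos)
  finally show ?thesis .
qed

lemma row_sum_Mf:
  assumes "a \<in> bar_set X dX"
  shows "(\<Sum>b\<in>bar_set Z dZ. Mf X dX Z dZ f a b) = bar_mult X dX a"
proof -
  have "0 < a"
    using assms by (simp add: bar_set_def)
  have "(\<Sum>b\<in>bar_set Z dZ. Mf X dX Z dZ f a b) = (\<Sum>b\<in>crit_values Z dZ. Mf X dX Z dZ f a b)"
    by (rule sum.mono_neutral_left[OF Z.finite_crit Z.bar_set_subset_crit])
      (auto intro: Mf_eq_0_outside)
  moreover have "F2.dim (ker_plus X dX (X.prev_crit a)) \<le> F2.dim (ker_plus X dX a)"
    using prev_value_less[OF X.finite_crit \<open>0 < a\<close>]
    by (intro F2.dim_subset_finite X.ker_plus_mono finite_ker_plus[OF X.finite_M]) simp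
  ultimately show ?thesis
    using row_sum_Mf_crit[OF \<open>0 < a\<close>] X.bar_mult_eq[OF \<open>0 < a\<close>] by linarith
qed

lemma col_sum_Mf_le:
  assumes "b \<in> bar_set Z dZ"
  shows "(\<Sum>a\<in>bar_set X dX. Mf X dX Z dZ f a b) \<le> bar_mult Z dZ b"
proof -
  have "0 < b"
    using assms by (simp add: bar_set_def)
  let ?S = "f0 X f ` ker_plus X dX X.max_crit"
  have sum_eq: "(\<Sum>a\<in>bar_set X dX. Mf X dX Z dZ f a b) = (\<Sum>a\<in>crit_values X dX. Mf X dX Z dZ f a b)"
    by (rule sum.mono_neutral_left[OF X.finite_crit X.bar_set_subset_crit])
      (auto intro: Mf_eq_0_outside)
  have ker_Z_mono: "ker_plus Z dZ (Z.prev_crit b) \<subseteq> ker_plus Z dZ b"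
    using Z.ker_plus_mono prev_value_less[OF Z.finite_crit \<open>0 < b\<close>] by simp
  have fin: "finite (ker_plus Z dZ b)"
    by (rule finite_ker_plus[OF Z.finite_M])
  have "F2.dim (?S \<inter> ker_plus Z dZ b) - F2.dim (?S \<inter> ker_plus Z dZ (Z.prev_crit b))
               \<le> F2.dim (ker_plus Z dZ b) - F2.dim (ker_plus Z dZ (Z.prev_crit b))"
    by (rule F2.dim_Int_diff_le[OF subspace_f0_ker_plus subspace_ker_plus subspace_ker_plus ker_Z_mono fin])
  moreover have "F2.dim (?S \<inter> ker_plus Z dZ (Z.prev_crit b)) \<le> F2.dim (?S \<inter> ker_plus Z dZ b)"
    using ker_Z_mono fin by (intro F2.dim_subset_finite) auto
  ultimately show ?thesis
    using sum_eq col_sum_Mf_crit[OF \<open>0 < b\<close>] Z.bar_mult_eq[OF \<open>0 < b\<close>] unfolding meet_dim_def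
    by linarith
qed

end

section \<open>Matching bar representatives\<close>

lemma fiber_preserving_injection:
  assumes "finite A" "finite B"
    and "\<And>i. card {a \<in> A. \<pi> a = i} \<le> card {b \<in> B. \<rho> b = i}"
  obtains \<sigma> where "inj_on \<sigma> A" "\<sigma> ` A \<subseteq> B" "\<And>a. a \<in> A \<Longrightarrow> \<rho> (\<sigma> a) = \<pi> a"
proof -
  have "\<forall>i. \<exists>g. g ` {a \<in> A. \<pi> a = i} \<subseteq> {b \<in> B. \<rho> b = i} \<and> inj_on g {a \<in> A. \<pi> a = i}"
    using assms by (intro allI card_le_inj) auto
  then obtain g where "\<forall>i. g i ` {a \<in> A. \<pi> a = i} \<subseteq> {b \<in> B. \<rho> b = i} \<and> inj_on (g i) {a \<in> A. \<pi> a = i}"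
    by (rule choice[THEN exE])
  then have g: "\<And>i. g i ` {a \<in> A. \<pi> a = i} \<subseteq> {b \<in> B. \<rho> b = i}"
    and inj_g: "\<And>i. inj_on (g i) {a \<in> A. \<pi> a = i}"
    by blast+
  define \<sigma> where "\<sigma> a = g (\<pi> a) a" for a
  have \<sigma>: "\<sigma> a \<in> B \<and> \<rho> (\<sigma> a) = \<pi> a" if "a \<in> A" for a
    using g[of "\<pi> a"] that unfolding \<sigma>_def by blast
  have "inj_on \<sigma> A"
  proof (rule inj_onI)
    fix a a' assume "a \<in> A" "a' \<in> A" "\<sigma> a = \<sigma> a'"
    moreover from this have "\<pi> a = \<pi> a'"
      using \<sigma> by metis
    ultimately show "a = a'"
      using inj_g[of "\<pi> a"] unfolding \<sigma>_def inj_on_def by auto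
  qed
  with \<sigma> that show ?thesis
    by blast
qed

lemma fiber_preserving_bijection:
  assumes "finite A" "finite B"
    and card_eq: "\<And>i. card {a \<in> A. \<pi> a = i} = card {b \<in> B. \<rho> b = i}"
  obtains \<sigma> where "bij_betw \<sigma> A B" "\<And>a. a \<in> A \<Longrightarrow> \<rho> (\<sigma> a) = \<pi> a"
proof -
  have "card {a \<in> A. \<pi> a = i} \<le> card {b \<in> B. \<rho> b = i}" for i
    using card_eq by simp
  then obtain \<sigma> where inj: "inj_on \<sigma> A" and into: "\<sigma> ` A \<subseteq> B" and \<sigma>: "\<And>a. a \<in> A \<Longrightarrow> \<rho> (\<sigma> a) = \<pi> a"
    using fiber_preserving_injection[OF assms(1,2)] by blast
  have "B \<subseteq> \<sigma> ` A"
  proof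
    fix b assume "b \<in> B"
    let ?A = "{a \<in> A. \<pi> a = \<rho> b}" and ?B = "{b' \<in> B. \<rho> b' = \<rho> b}"
    have "\<sigma> ` ?A \<subseteq> ?B"
      using into \<sigma> by auto
    moreover have "card (\<sigma> ` ?A) = card ?B"
      using card_image[OF inj_on_subset[OF inj]] card_eq by auto
    ultimately have "\<sigma> ` ?A = ?B"
      using assms(2) by (intro card_subset_eq) auto
    then show "b \<in> \<sigma> ` A"
      using \<open>b \<in> B\<close> by blast
  qed
  then have "bij_betw \<sigma> A B"
    using inj into by (auto simp: bij_betw_def)
  with \<sigma> that show ?thesis
    by blast
qed

lemma card_bij_betw_Collect:
  assumes "bij_betw \<tau> A T"
  shows "card {p \<in> A. P (\<tau> p)} = card {t \<in> T. P t}"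
proof (rule bij_betw_same_card)
  show "bij_betw \<tau> {p \<in> A. P (\<tau> p)} {t \<in> T. P t}"
    using assms by (auto simp: bij_betw_def intro: inj_on_subset)
qed

lemma Rep_eq_Sigma: "Rep S m = Sigma S (\<lambda>s. {1..m s})"
  by (auto simp: Rep_def)

text \<open>The injection factors through the set of triples \<open>(a, b, k)\<close> with \<open>1 \<le> k \<le> M a b\<close>:
  since the rows of \<open>M\<close> sum to \<open>mX\<close>, the representatives of bars at \<open>a\<close> correspond
  bijectively to the triples with first entry \<open>a\<close>; since the columns sum to at most \<open>mZ\<close>,
  the triples with middle entry \<open>b\<close> inject into the representatives of bars at \<open>b\<close>.\<close>

lemma injection_with_prescribed_counts:
  fixes M :: "real \<Rightarrow> real \<Rightarrow> nat" and mX mZ :: "real \<Rightarrow> nat"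
  assumes fin: "finite SX" "finite SZ"
    and rows: "\<And>a. a \<in> SX \<Longrightarrow> (\<Sum>b\<in>SZ. M a b) = mX a"
    and cols: "\<And>b. b \<in> SZ \<Longrightarrow> (\<Sum>a\<in>SX. M a b) \<le> mZ b"
    and zero: "\<And>a b. a \<notin> SX \<or> b \<notin> SZ \<Longrightarrow> M a b = 0"
  shows "\<exists>\<sigma>. inj_on \<sigma> (Rep SX mX) \<and> \<sigma> ` Rep SX mX \<subseteq> Rep SZ mZ
             \<and> (\<forall>a b. card {p \<in> Rep SX mX. fst p = a \<and> fst (\<sigma> p) = b} = M a b)"
proof -
  define T where "T = Sigma SX (\<lambda>a. Sigma SZ (\<lambda>b. {1..M a b}))"
  have "finite T" "finite (Rep SX mX)" "finite (Rep SZ mZ)"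
    using fin by (simp_all add: T_def Rep_eq_Sigma)
  have row_fiber: "{t \<in> T. fst t = a} = {a} \<times> Sigma SZ (\<lambda>b. {1..M a b})" for a
    by (cases "a \<in> SX") (auto simp: T_def zero)
  have col_fiber: "{t \<in> T. fst (snd t) = b} = Sigma SX (\<lambda>a. {b} \<times> {1..M a b})" for b
    by (cases "b \<in> SZ") (auto simp: T_def zero)
  have cell: "{t \<in> T. fst t = a \<and> fst (snd t) = b} = {a} \<times> {b} \<times> {1..M a b}" for a b
    by (cases "a \<in> SX \<and> b \<in> SZ") (auto simp: T_def zero)
  have Rep_fiber: "{p \<in> Rep S m. fst p = a} = (if a \<in> S then {a} \<times> {1..m a} else {})" for S m a
    by (auto simp: Rep_eq_Sigma)
  have "card {p \<in> Rep SX mX. fst p = a} = card {t \<in> T. fst t = a}" for a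
    using fin rows zero by (simp add: Rep_fiber row_fiber card_cartesian_product)
  then obtain \<tau> where \<tau>: "bij_betw \<tau> (Rep SX mX) T" and fst_\<tau>: "\<And>p. p \<in> Rep SX mX \<Longrightarrow> fst (\<tau> p) = fst p"
    using fiber_preserving_bijection[OF \<open>finite (Rep SX mX)\<close> \<open>finite T\<close>,
        where \<pi> = fst and \<rho> = fst] by blast
  have "card {t \<in> T. fst (snd t) = b} \<le> card {q \<in> Rep SZ mZ. fst q = b}" for b
    using fin cols zero by (simp add: col_fiber Rep_fiber card_cartesian_product)
  then obtain \<nu> where \<nu>: "inj_on \<nu> T" "\<nu> ` T \<subseteq> Rep SZ mZ" and fst_\<nu>: "\<And>t. t \<in> T \<Longrightarrow> fst (\<nu> t) = fst (snd t)"
    using fiber_preserving_injection[OF \<open>finite T\<close> \<open>finite (Rep SZ mZ)\<close>,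
        where \<pi> = "\<lambda>t. fst (snd t)" and \<rho> = fst] by blast
  have count: "card {p \<in> Rep SX mX. fst p = a \<and> fst (\<nu> (\<tau> p)) = b} = M a b" for a b
  proof -
    have "{p \<in> Rep SX mX. fst p = a \<and> fst (\<nu> (\<tau> p)) = b}
            = {p \<in> Rep SX mX. fst (\<tau> p) = a \<and> fst (snd (\<tau> p)) = b}"
      using fst_\<tau> fst_\<nu> bij_betwE[OF \<tau>] by (intro Collect_cong) metis
    then show ?thesis
      using card_bij_betw_Collect[OF \<tau>, where P = "\<lambda>t. fst t = a \<and> fst (snd t) = b"]
      by (simp add: cell card_cartesian_product)
  qed
  have "inj_on (\<nu> \<circ> \<tau>) (Rep SX mX)"
    using bij_betw_imp_inj_on[OF \<tau>] \<nu>(1) bij_betw_imp_surj_on[OF \<tau>] by (simp add: comp_inj_on)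
  moreover have "(\<nu> \<circ> \<tau>) ` Rep SX mX \<subseteq> Rep SZ mZ"
    unfolding image_comp[symmetric] using \<nu>(2) bij_betw_imp_surj_on[OF \<tau>] by simp
  ultimately show ?thesis
    using count by (intro exI[of _ "\<nu> \<circ> \<tau>"]) simp
qed

theorem proposition4p5:
  fixes X :: "'a set" and dX :: "'a \<Rightarrow> 'a \<Rightarrow> real"
    and Z :: "'b set" and dZ :: "'b \<Rightarrow> 'b \<Rightarrow> real"
    and f :: "'a \<Rightarrow> 'b"
  assumes "Metric_space X dX" "finite X"
    and "Metric_space Z dZ" "finite Z"
    and "inj_on f X" "f ` X \<subseteq> Z"
  shows "(\<forall>a \<in> bar_set X dX. (\<Sum>b \<in> bar_set Z dZ. Mf X dX Z dZ f a b) = bar_mult X dX a)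
       \<and> (\<forall>b \<in> bar_set Z dZ. (\<Sum>a \<in> bar_set X dX. Mf X dX Z dZ f a b) \<le> bar_mult Z dZ b)
       \<and> (\<exists>\<sigma>. inj_on \<sigma> (Rep (bar_set X dX) (bar_mult X dX))
              \<and> \<sigma> ` Rep (bar_set X dX) (bar_mult X dX) \<subseteq> Rep (bar_set Z dZ) (bar_mult Z dZ)
              \<and> (\<forall>a b. card {p \<in> Rep (bar_set X dX) (bar_mult X dX).
                                fst p = a \<and> fst (\<sigma> p) = b} = Mf X dX Z dZ f a b))"
proof -
  interpret finite_metric_injection X dX Z dZ f
    using assms by (simp add: finite_metric_injection_def finite_metric_injection_axioms_def
        finite_Metric_space_def finite_Metric_space_axioms_def)
  show ?thesis
    using row_sum_Mf col_sum_Mf_le Mf_eq_0_outside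
    by (auto intro!: injection_with_prescribed_counts X.finite_bar_set Z.finite_bar_set)
qed

end
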